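(* For every probability vector $\boldsymbol\alpha\in\mathbb R^{\mathcal X}$ and every $r>0$, $$\int_{\mathcal Q'(\boldsymbol\alpha,r)}\ \prod_{x\in\mathcal X'}\frac{1}{2\sqrt{\zeta_x}}\ \mathrm d\boldsymbol\zeta'\ \ge\ r^{\frac{|\mathcal X|-1}{2}}\left(\sqrt{2+\tfrac{1}{|\mathcal X|-1}}-\sqrt2\right)^{|\mathcal X|-1}.$$
   Context: $\mathcal X$ finite, $|\mathcal X|\ge2$. $x_{\max}=x_{\max}(\boldsymbol\alpha)$ is an index of a largest entry of $\boldsymbol\alpha$, $\mathcal X'=\mathcal X\setminus\{x_{\max}\}$. $\omega_\downarrow(a,r)=\max(\sqrt{r^2/4+ar}-r/2,\ r)$ and $\omega'(a,r)=\omega_\downarrow(a,r)/(|\mathcal X|-1)$. $\mathcal Q'(\boldsymbol\alpha,r)=\{\boldsymbol\zeta'=(\zeta_x)_{x\in\mathcal X'}\in\mathbb R^{\mathcal X'}: 0\le\zeta_x-\alpha_x\le\omega'(\alpha_x,r)\ \forall x\in\mathcal X'\}$; the integral is the Lebesgue integral over $\mathbb R^{\mathcal X'}$. *)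

theory Defs
  imports "HOL-Analysis.Analysis" "HOL-Probability.Probability"
begin

definition omega_down :: "real \<Rightarrow> real \<Rightarrow> real" where
  "omega_down a r = max (sqrt (r^2/4 + a*r) - r/2) r"

definition omega' :: "nat \<Rightarrow> real \<Rightarrow> real \<Rightarrow> real" where
  "omega' n a r = omega_down a r / (real n - 1)"

(* Q'(alpha, r) as a subset of the space of extensional functions on X' = UNIV - {xm} *)
definition Qprime :: "('x::finite \<Rightarrow> real) \<Rightarrow> 'x \<Rightarrow> real \<Rightarrow> ('x \<Rightarrow> real) set" where
  "Qprime \<alpha> xm r = {\<zeta> \<in> PiE (UNIV - {xm}) (\<lambda>_. UNIV).
      \<forall>x\<in>UNIV - {xm}. 0 \<le> \<zeta> x - \<alpha> x \<and> \<zeta> x - \<alpha> x \<le> omega' CARD('x) (\<alpha> x) r}"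

end

theory Submission
  imports Defs
begin

text \<open>The integrand \<open>1 / (2 \<surd>\<zeta>\<^sub>x)\<close> is the derivative of \<open>\<surd>\<zeta>\<^sub>x\<close> and \<open>\<Q>'\<close> is a box, so
  the integral factorises into \<open>\<Prod>\<^sub>x (\<surd>(\<alpha>\<^sub>x + \<omega>'\<^sub>x) - \<surd>\<alpha>\<^sub>x)\<close>. Each factor is at least
  \<open>\<surd>(2r + rd) - \<surd>(2r)\<close> with \<open>d = 1 / (|\<X>| - 1)\<close>: writing \<open>w = \<omega>\<^sub>\<down>(\<alpha>\<^sub>x, r)\<close>, one has
  \<open>r \<le> w\<close> and \<open>r \<alpha>\<^sub>x \<le> 2 w\<^sup>2\<close>, and comparing \<open>\<surd>(a + wd) - \<surd>a = wd / (\<surd>(a + wd) + \<surd>a)\<close>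
  with the same expression at \<open>a = 2r\<close>, \<open>w = r\<close> gives the bound.\<close>

lemma nn_integral_inverse_sqrt_interval:
  fixes a b :: real
  assumes "0 \<le> a" "a \<le> b"
  shows "(\<integral>\<^sup>+y. ennreal (indicator {a..b} y / (2 * sqrt y)) \<partial>lborel) = ennreal (sqrt b - sqrt a)"
proof -
  have "((\<lambda>y. 1 / (2 * sqrt y)) has_integral (sqrt b - sqrt a)) {a..b}"
  proof (rule fundamental_theorem_of_calculus_interior[OF assms(2)])
    show "continuous_on {a..b} sqrt"
      by (intro continuous_intros)
    fix y :: real
    assume "y \<in> {a<..<b}"
    then have "(sqrt has_real_derivative inverse (sqrt y) / 2) (at y)"
      using assms by (intro DERIV_real_sqrt) auto
    then show "(sqrt has_vector_derivative 1 / (2 * sqrt y)) (at y)"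
      by (simp add: has_real_derivative_iff_has_vector_derivative[symmetric] field_simps)
  qed
  moreover have "(\<lambda>y. indicator {a..b} y / (2 * sqrt y)) = (\<lambda>y. if y \<in> {a..b} then 1 / (2 * sqrt y) else 0)"
    by (auto simp: indicator_def)
  ultimately have "((\<lambda>y. indicator {a..b} y / (2 * sqrt y)) has_integral (sqrt b - sqrt a)) UNIV"
    by (simp only: has_integral_restrict_UNIV)
  then show ?thesis
    using assms by (subst nn_integral_has_integral_lborel) (auto simp: indicator_def)
qed

lemma nn_integral_inverse_sqrt_box:
  fixes a b :: "'i \<Rightarrow> real"
  assumes I: "finite I" and a: "\<And>i. i \<in> I \<Longrightarrow> 0 \<le> a i" and ab: "\<And>i. i \<in> I \<Longrightarrow> a i \<le> b i"
  shows "(\<integral>\<^sup>+ \<zeta>. indicator (PiE I (\<lambda>i. {a i..b i})) \<zeta> * ennreal (\<Prod>i\<in>I. 1 / (2 * sqrt (\<zeta> i)))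
            \<partial>PiM I (\<lambda>_. lborel))
       = ennreal (\<Prod>i\<in>I. sqrt (b i) - sqrt (a i))"
proof -
  interpret product_sigma_finite "\<lambda>_::'i. lborel :: real measure"
    by standard
  define f where "f i = (\<lambda>y. ennreal (indicator {a i..b i} y / (2 * sqrt y)))" for i
  have "(\<integral>\<^sup>+ \<zeta>. indicator (PiE I (\<lambda>i. {a i..b i})) \<zeta> * ennreal (\<Prod>i\<in>I. 1 / (2 * sqrt (\<zeta> i)))
            \<partial>PiM I (\<lambda>_. lborel))
      = (\<integral>\<^sup>+ \<zeta>. (\<Prod>i\<in>I. f i (\<zeta> i)) \<partial>PiM I (\<lambda>_. lborel))"
  proof (rule nn_integral_cong)
    fix \<zeta> assume "\<zeta> \<in> space (PiM I (\<lambda>_. lborel :: real measure))"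
    then have \<zeta>: "\<zeta> \<in> PiE I (\<lambda>_. UNIV)"
      by (simp add: space_PiM)
    show "indicator (PiE I (\<lambda>i. {a i..b i})) \<zeta> * ennreal (\<Prod>i\<in>I. 1 / (2 * sqrt (\<zeta> i)))
        = (\<Prod>i\<in>I. f i (\<zeta> i))"
    proof (cases "\<forall>i\<in>I. \<zeta> i \<in> {a i..b i}")
      case True
      then have "\<zeta> \<in> PiE I (\<lambda>i. {a i..b i})"
        using \<zeta> by (auto simp: PiE_def)
      moreover have "(\<Prod>i\<in>I. f i (\<zeta> i)) = (\<Prod>i\<in>I. ennreal (1 / (2 * sqrt (\<zeta> i))))"
        using True by (intro prod.cong) (simp_all add: f_def)
      moreover have "\<dots> = ennreal (\<Prod>i\<in>I. 1 / (2 * sqrt (\<zeta> i)))"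
        using True a by (intro prod_ennreal) (meson atLeastAtMost_iff order_trans real_sqrt_ge_zero
            divide_nonneg_nonneg mult_nonneg_nonneg zero_le_numeral zero_le_one)
      ultimately show ?thesis
        by simp
    next
      case False
      then obtain i where i: "i \<in> I" "\<zeta> i \<notin> {a i..b i}"
        by blast
      then have "\<zeta> \<notin> PiE I (\<lambda>i. {a i..b i})" "f i (\<zeta> i) = 0"
        by (auto simp: f_def)
      then show ?thesis
        using I i by (auto intro!: prod_zero)
    qed
  qed
  also have "\<dots> = (\<Prod>i\<in>I. integral\<^sup>N lborel (f i))"
    by (rule product_nn_integral_prod[OF I]) (simp add: f_def)
  also have "\<dots> = (\<Prod>i\<in>I. ennreal (sqrt (b i) - sqrt (a i)))"
    using a ab by (intro prod.cong) (simp_all add: f_def nn_integral_inverse_sqrt_interval)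
  also have "\<dots> = ennreal (\<Prod>i\<in>I. sqrt (b i) - sqrt (a i))"
    using ab by (intro prod_ennreal) simp
  finally show ?thesis .
qed

lemma Qprime_eq_PiE:
  "Qprime \<alpha> xm r = PiE (UNIV - {xm}) (\<lambda>x. {\<alpha> x..\<alpha> x + omega' CARD('x) (\<alpha> x) r})"
  for \<alpha> :: "'x::finite \<Rightarrow> real"
  by (force simp: Qprime_def PiE_def Pi_def)

lemma sqrt_add_diff_eq_divide:
  fixes x e :: real
  assumes "0 \<le> x" "0 < e"
  shows "sqrt (x + e) - sqrt x = e / (sqrt (x + e) + sqrt x)"
proof -
  have "(sqrt (x + e) - sqrt x) * (sqrt (x + e) + sqrt x) = e"
    using assms by (simp add: algebra_simps)
  moreover have "sqrt (x + e) + sqrt x > 0"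
    using assms by (simp add: add_pos_nonneg)
  ultimately show ?thesis
    by (simp add: field_simps)
qed

lemma mult_sqrt_le_mult_sqrt:
  fixes u v x y :: real
  assumes "0 \<le> u" "0 \<le> v" "u\<^sup>2 * x \<le> v\<^sup>2 * y"
  shows "u * sqrt x \<le> v * sqrt y"
  using real_sqrt_le_mono[OF assms(3)] assms(1,2) by (simp add: real_sqrt_mult)

lemma sqrt_increment_mono:
  fixes a d r w :: real
  assumes r: "0 < r" "r \<le> w" and a: "0 \<le> a" "r * a \<le> 2 * w\<^sup>2" and d: "0 < d"
  shows "sqrt (2 * r + r * d) - sqrt (2 * r) \<le> sqrt (a + w * d) - sqrt a"
proof -
  have w: "0 < w"
    using r by linarith
  have ra: "r * (r * a) \<le> r * (2 * w\<^sup>2)"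
    using a r by (intro mult_left_mono) auto
  have "r * (sqrt (a + w * d) + sqrt a) \<le> w * (sqrt (2 * r + r * d) + sqrt (2 * r))"
  proof -
    have "r * sqrt (a + w * d) \<le> w * sqrt (2 * r + r * d)"
    proof (rule mult_sqrt_le_mult_sqrt)
      have "r * (r * w * d) \<le> r * (w * w * d)"
        using r d by (intro mult_left_mono) auto
      then show "r\<^sup>2 * (a + w * d) \<le> w\<^sup>2 * (2 * r + r * d)"
        using ra by (simp add: power2_eq_square algebra_simps)
    qed (use r w in auto)
    moreover have "r * sqrt a \<le> w * sqrt (2 * r)"
      using ra r w by (intro mult_sqrt_le_mult_sqrt) (auto simp: power2_eq_square algebra_simps)
    ultimately show ?thesis
      by (simp add: distrib_left)
  qed
  moreover have "0 < sqrt (2 * r + r * d) + sqrt (2 * r)"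
    using r mult_pos_pos[OF r(1) d] by (intro add_pos_nonneg) auto
  moreover have "0 < sqrt (a + w * d) + sqrt a"
    using a mult_pos_pos[OF w d] by (intro add_pos_nonneg) auto
  ultimately have "r * d / (sqrt (2 * r + r * d) + sqrt (2 * r)) \<le> w * d / (sqrt (a + w * d) + sqrt a)"
    using d by (simp add: divide_simps)
  then show ?thesis
    using r w a d sqrt_add_diff_eq_divide[of a "w * d"] sqrt_add_diff_eq_divide[of "2 * r" "r * d"]
    by simp
qed

lemma omega_down_ge: "r \<le> omega_down a r"
  by (simp add: omega_down_def)

lemma omega_down_square_bound:
  assumes "0 \<le> a" "0 < r"
  shows "r * a \<le> 2 * (omega_down a r)\<^sup>2"
proof -
  define w where "w = sqrt (r\<^sup>2 / 4 + a * r) - r / 2"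
  have "r / 2 \<le> sqrt (r\<^sup>2 / 4 + a * r)"
    using assms by (intro real_le_rsqrt) (simp add: power_divide)
  then have w: "0 \<le> w" "w \<le> omega_down a r"
    by (simp_all add: w_def omega_down_def)
  have "(w + r / 2)\<^sup>2 = r\<^sup>2 / 4 + a * r"
    using assms by (simp add: w_def)
  then have "r * a = w\<^sup>2 + r * w"
    by (simp add: power2_eq_square algebra_simps)
  also have "\<dots> \<le> (omega_down a r)\<^sup>2 + omega_down a r * omega_down a r"
    using w assms omega_down_ge[of r a] by (intro add_mono power_mono mult_mono) auto
  finally show ?thesis
    by (simp add: power2_eq_square)
qed

lemma sqrt_increment_omega_down:
  fixes a d r :: real
  assumes "0 \<le> a" "0 < r" "0 < d"
  shows "sqrt r * (sqrt (2 + d) - sqrt 2) \<le> sqrt (a + omega_down a r * d) - sqrt a"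
proof -
  have "sqrt r * (sqrt (2 + d) - sqrt 2) = sqrt (2 * r + r * d) - sqrt (2 * r)"
    by (simp add: algebra_simps flip: real_sqrt_mult)
  also have "\<dots> \<le> sqrt (a + omega_down a r * d) - sqrt a"
    using assms by (intro sqrt_increment_mono omega_down_ge omega_down_square_bound)
  finally show ?thesis .
qed

lemma sqrt_power_eq_powr:
  fixes r :: real
  assumes "0 < r"
  shows "sqrt r ^ n = r powr (real n / 2)"
  using assms by (simp add: powr_half_sqrt[symmetric] powr_powr flip: powr_realpow)

theorem lemma6:
  fixes \<alpha> :: "'x::finite \<Rightarrow> real" and r :: real and xm :: 'x
  assumes card: "CARD('x) \<ge> 2"
    and nonneg: "\<forall>x. \<alpha> x \<ge> 0"
    and sum1: "(\<Sum>x\<in>UNIV. \<alpha> x) = 1"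
    and xm_max: "\<forall>x. \<alpha> x \<le> \<alpha> xm"
    and r: "r > 0"
  shows "(\<integral>\<^sup>+ \<zeta>. indicator (Qprime \<alpha> xm r) \<zeta> *
            ennreal (\<Prod>x\<in>UNIV - {xm}. 1 / (2 * sqrt (\<zeta> x)))
          \<partial>(PiM (UNIV - {xm}) (\<lambda>_. lborel)))
       \<ge> ennreal (r powr ((real CARD('x) - 1) / 2) *
            (sqrt (2 + 1 / (real CARD('x) - 1)) - sqrt 2) ^ (CARD('x) - 1))"
proof -
  define d where "d = 1 / (real CARD('x) - 1)"
  define b where "b x = \<alpha> x + omega' CARD('x) (\<alpha> x) r" for x
  have d: "0 < d"
    using card by (simp add: d_def)
  have b: "b x = \<alpha> x + omega_down (\<alpha> x) r * d" for x
    by (simp add: b_def d_def omega'_def)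
  have "0 \<le> omega_down (\<alpha> x) r * d" for x
    using omega_down_ge[of r "\<alpha> x"] r d by (intro mult_nonneg_nonneg) linarith+
  then have \<alpha>_le_b: "\<alpha> x \<le> b x" for x
    by (simp add: b)
  have "(\<Prod>x\<in>UNIV - {xm}. sqrt r * (sqrt (2 + d) - sqrt 2)) \<le> (\<Prod>x\<in>UNIV - {xm}. sqrt (b x) - sqrt (\<alpha> x))"
    using nonneg r d by (intro prod_mono) (simp add: b sqrt_increment_omega_down)
  moreover have "(\<Prod>x\<in>UNIV - {xm}. sqrt r * (sqrt (2 + d) - sqrt 2))
      = r powr ((real CARD('x) - 1) / 2) * (sqrt (2 + d) - sqrt 2) ^ (CARD('x) - 1)"
    using card r by (simp add: card_Diff_subset power_mult_distrib sqrt_power_eq_powr)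
  ultimately show ?thesis
    unfolding Qprime_eq_PiE b_def[symmetric] d_def[symmetric]
    using nonneg \<alpha>_le_b by (simp add: nn_integral_inverse_sqrt_box ennreal_leI)
qed

end
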